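(* For every $t\in\mathbb{N}$ there exists $n_0(t)$ such that for all $n\ge n_0(t)$ the following holds. Let $\mathcal{F}\subseteq\mathcal{M}_{2n}$ be a $t$-intersecting family. For any distinct vertices $i,j,k$ of $K_{2n}$, \[|\mathcal{F}\!\downarrow_{ij}|\cdot|\mathcal{F}\!\downarrow_{ik}|\le\big((2(n-t-1)-1)!!\big)^2.\]
   Context: $\mathcal{M}_{2n}$ is the set of perfect matchings of $K_{2n}$. A family $\mathcal{F}$ is $t$-intersecting if $|m\cap m'|\ge t$ for all $m,m'\in\mathcal{F}$. For an edge $ij$, $\mathcal{F}\!\downarrow_{ij}=\{m\in\mathcal{F}: \{i,j\}\in m\}$. $(2k-1)!!=1\cdot3\cdots(2k-1)$. *)

theory Defs
  imports Main
begin

definition perfect_matchings :: "nat \<Rightarrow> nat set set set" where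
  "perfect_matchings n =
     {m. (\<forall>e\<in>m. \<exists>a b. a \<noteq> b \<and> e = {a, b} \<and> a < 2 * n \<and> b < 2 * n) \<and>
         (\<forall>v<2 * n. \<exists>!e. e \<in> m \<and> v \<in> e)}"

definition t_intersecting :: "nat \<Rightarrow> 'a set set \<Rightarrow> bool" where
  "t_intersecting t F \<longleftrightarrow> (\<forall>m\<in>F. \<forall>m'\<in>F. card (m \<inter> m') \<ge> t)"

definition restrict_edge :: "nat set set set \<Rightarrow> nat \<Rightarrow> nat \<Rightarrow> nat set set set" where
  "restrict_edge F i j = {m \<in> F. {i, j} \<in> m}"

(* dfact k = (2k-1)!! = 1 * 3 * ... * (2k-1); dfact 0 = 1 *)
fun dfact :: "nat \<Rightarrow> nat" where
  "dfact 0 = 1"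
| "dfact (Suc k) = (2 * k + 1) * dfact k"

end

theory Submission
  imports Defs "HOL-Library.Log_Nat" "HOL-Real_Asymp.Real_Asymp"
begin

(* Write X and Y for the matchings of F through ij and through ik: they are cross t-intersecting,
   and every member of X contains ij but not ik, and vice versa.  Spread approximation: a family of
   more than (n+1)^q (2(n-q)-1)!! matchings is spread around a core of fewer than q edges, and a
   spread family has a member meeting any fixed matching only inside the core; hence every member of
   Y has t edges in the core of X and conversely.  Taking q of order log n, all members of X and Y
   meet a set U of at most 2q edges in at least t edges.  Those meeting U in more than t edges are
   negligible; among the others, let x_T and y_T count the members of X and Y whose trace on U is
   the t-set T, so that x_T, y_T <= (2(n-t-1)-1)!!.  For T <> T' the product x_T y_T' is smaller by
   a factor of order q/n, since the spread argument forces a further edge into the members of Y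
   counted by y_T'.  All diagonal products x_T y_T but the largest are then equally small, and the
   largest is smaller by a factor (n-1)/(2n-2t-3) unless one t-set lies in every member of X and Y,
   in which case both families are at most (2(n-t-1)-1)!! anyway. *)

section \<open>Double factorials\<close>

lemma dfact_pos: "0 < dfact k"
  by (induction k) auto

lemma dfact_mono: "a \<le> b \<Longrightarrow> dfact a \<le> dfact b"
  by (rule lift_Suc_mono_le) auto

lemma dfact_add_ge: "(2 * a + 1) ^ b * dfact a \<le> dfact (a + b)"
proof (induction b)
  case (Suc b)
  have "(2 * a + 1) ^ Suc b * dfact a = (2 * a + 1) * ((2 * a + 1) ^ b * dfact a)"
    by (simp add: algebra_simps)
  also have "\<dots> \<le> (2 * (a + b) + 1) * dfact (a + b)"
    using Suc.IH by (intro mult_mono) simp_all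
  finally show ?case
    by simp
qed simp

lemma dfact_add_le: "dfact (a + b) \<le> (2 * (a + b)) ^ b * dfact a"
proof (induction b)
  case (Suc b)
  have "dfact (a + Suc b) = (2 * (a + b) + 1) * dfact (a + b)"
    by simp
  also have "\<dots> \<le> (2 * (a + Suc b)) * ((2 * (a + b)) ^ b * dfact a)"
    using Suc.IH by (intro mult_mono) simp_all
  also have "\<dots> \<le> (2 * (a + Suc b)) * ((2 * (a + Suc b)) ^ b * dfact a)"
    by (intro mult_left_mono mult_right_mono power_mono) simp_all
  finally show ?case
    by (simp only: power_Suc mult.assoc)
qed simp

section \<open>Counting matchings\<close>

lemma card_le_sum_card_of_subset_UN:
  assumes "finite I" "\<And>i. i \<in> I \<Longrightarrow> finite (A i)" "B \<subseteq> (\<Union>i\<in>I. A i)"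
  shows "card B \<le> (\<Sum>i\<in>I. card (A i))"
  using card_mono[OF finite_UN_I[OF assms(1,2)] assms(3)] card_UN_le[OF assms(1)] by (rule le_trans)

definition matchings_on :: "'a set \<Rightarrow> 'a set set set" where
  "matchings_on S = {m. (\<forall>e\<in>m. \<exists>a b. a \<noteq> b \<and> e = {a, b} \<and> a \<in> S \<and> b \<in> S) \<and>
                        (\<forall>v\<in>S. \<exists>!e. e \<in> m \<and> v \<in> e)}"

abbreviation containing :: "'a set set \<Rightarrow> 'a set \<Rightarrow> 'a set set" where
  "containing G E \<equiv> {g \<in> G. E \<subseteq> g}"

lemma perfect_matchings_eq_matchings_on: "perfect_matchings n = matchings_on {0..<2 * n}"
  unfolding perfect_matchings_def matchings_on_def
  by (intro Collect_cong conj_cong) (simp_all only: atLeastLessThan_iff Ball_def, auto)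

context
  fixes S :: "'a set" and m :: "'a set set"
  assumes m: "m \<in> matchings_on S"
begin

lemma matching_edgeE:
  assumes "e \<in> m"
  obtains a b where "a \<noteq> b" "e = {a, b}" "a \<in> S" "b \<in> S"
proof -
  have "\<forall>e\<in>m. \<exists>a b. a \<noteq> b \<and> e = {a, b} \<and> a \<in> S \<and> b \<in> S"
    using m by (simp add: matchings_on_def)
  then show ?thesis
    using that assms by blast
qed

lemma matching_edge_subset: "e \<in> m \<Longrightarrow> e \<subseteq> S"
  by (elim matching_edgeE) simp

lemma card_matching_edge: "e \<in> m \<Longrightarrow> card e = 2"
  by (elim matching_edgeE) simp

lemma matching_covers_uniquely: "v \<in> S \<Longrightarrow> \<exists>!e. e \<in> m \<and> v \<in> e"
  using m by (simp add: matchings_on_def)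

lemma matching_covers: "v \<in> S \<Longrightarrow> \<exists>e\<in>m. v \<in> e"
  using matching_covers_uniquely by blast

lemma matching_edge_unique:
  assumes "e \<in> m" "e' \<in> m" "v \<in> e" "v \<in> e'"
  shows "e = e'"
proof -
  have "\<exists>!e. e \<in> m \<and> v \<in> e"
    using matching_covers_uniquely matching_edge_subset assms(1,3) by blast
  then show ?thesis
    using assms by blast
qed

lemma matching_Diff_edge:
  assumes e: "e \<in> m"
  shows "m - {e} \<in> matchings_on (S - e)"
  unfolding matchings_on_def
proof (intro CollectI conjI ballI)
  fix e' assume e': "e' \<in> m - {e}"
  then obtain a b where "a \<noteq> b" "e' = {a, b}" "a \<in> S" "b \<in> S"
    by (blast elim: matching_edgeE)
  moreover have "a \<notin> e" "b \<notin> e" if "e' = {a, b}" for a b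
    using matching_edge_unique[OF e] e' that by blast+
  ultimately show "\<exists>a b. a \<noteq> b \<and> e' = {a, b} \<and> a \<in> S - e \<and> b \<in> S - e"
    by blast
next
  fix v assume v: "v \<in> S - e"
  then obtain e' where "e' \<in> m" "v \<in> e'"
    using matching_covers by blast
  then show "\<exists>!e'. e' \<in> m - {e} \<and> v \<in> e'"
    using v matching_edge_unique by blast
qed

lemma finite_matching: "finite S \<Longrightarrow> finite m"
  using matching_edge_subset by (metis Pow_iff finite_Pow_iff finite_subset subsetI)

lemma card_eq_twice_card_matching:
  assumes "finite S"
  shows "card S = 2 * card m"
proof -
  have "\<Union>m = S"
    using matching_edge_subset matching_covers by blast
  moreover have "pairwise disjnt m"
    using matching_edge_unique unfolding pairwise_def disjnt_def by blast
  moreover have "finite e" if "e \<in> m" for e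
    using assms matching_edge_subset[OF that] finite_subset by blast
  ultimately have "card S = sum card m"
    using card_Union_disjoint by metis
  then show ?thesis
    using card_matching_edge by simp
qed

end

lemma finite_matchings_on: "finite S \<Longrightarrow> finite (matchings_on S)"
  by (rule finite_subset[of _ "Pow (Pow S)"]) (auto dest: matching_edge_subset)

lemma card_matchings_on_le: "finite S \<Longrightarrow> card S = 2 * r \<Longrightarrow> card (matchings_on S) \<le> dfact r"
proof (induction r arbitrary: S)
  case 0
  then have "matchings_on S \<subseteq> {{}}"
    by (auto elim: matching_edgeE)
  then have "card (matchings_on S) \<le> card {{} :: 'a set set}"
    by (intro card_mono) simp_all
  then show ?case
    by simp
next
  case (Suc r)
  then obtain v where v: "v \<in> S"
    by fastforce
  define K where "K u = insert {v, u} ` matchings_on (S - {v, u})" for u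
  \<comment> \<open>a matching is determined by the partner u of v and a matching of the remaining vertices\<close>
  have "matchings_on S \<subseteq> (\<Union>u\<in>S - {v}. K u)"
  proof
    fix m assume m: "m \<in> matchings_on S"
    obtain e where e: "e \<in> m" "v \<in> e"
      using matching_covers[OF m v] by blast
    then obtain u where u: "e = {v, u}" "u \<in> S - {v}"
      by (elim matching_edgeE[OF m]) auto
    then have "m = insert {v, u} (m - {e})" "m - {e} \<in> matchings_on (S - {v, u})"
      using e matching_Diff_edge[OF m e(1)] by auto
    then show "m \<in> (\<Union>u\<in>S - {v}. K u)"
      unfolding K_def using u by blast
  qed
  then have "card (matchings_on S) \<le> (\<Sum>u\<in>S - {v}. card (K u))"
    unfolding K_def using Suc.prems(1)
    by (intro card_le_sum_card_of_subset_UN) (simp_all add: finite_matchings_on)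
  also have "\<dots> \<le> (\<Sum>u\<in>S - {v}. dfact r)"
  proof (rule sum_mono)
    fix u assume "u \<in> S - {v}"
    then have "card {v, u} = 2"
      by auto
    then have "card (S - {v, u}) = 2 * r"
      using \<open>u \<in> S - {v}\<close> v Suc.prems by (simp add: card_Diff_subset)
    then have "card (matchings_on (S - {v, u})) \<le> dfact r"
      using Suc by simp
    then show "card (K u) \<le> dfact r"
      unfolding K_def using card_image_le Suc.prems(1) finite_matchings_on
      by (metis finite_Diff le_trans)
  qed
  also have "\<dots> = dfact (Suc r)"
    using Suc.prems v by simp
  finally show ?case .
qed

lemma card_matchings_on_containing_le:
  assumes "finite P" "finite S" "card S = 2 * r"
  shows "card (containing (matchings_on S) P) \<le> dfact (r - card P)"
  using assms
proof (induction P arbitrary: S r rule: finite_induct)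
  case empty
  then show ?case
    using card_matchings_on_le by simp
next
  case (insert e P)
  show ?case
  proof (cases "\<exists>m\<in>matchings_on S. e \<in> m")
    case True
    then obtain m0 where m0: "m0 \<in> matchings_on S" "e \<in> m0"
      by blast
    then have "card (S - e) = 2 * (r - 1)"
      using matching_edge_subset[OF m0] card_matching_edge[OF m0] insert.prems
      by (simp add: card_Diff_subset finite_subset)
    have "card (containing (matchings_on S) (insert e P)) \<le> card (containing (matchings_on (S - e)) P)"
    proof (rule card_inj_on_le[where f = "\<lambda>m. m - {e}"])
      show "inj_on (\<lambda>m. m - {e}) (containing (matchings_on S) (insert e P))"
        by (rule inj_onI) (metis (no_types, lifting) insert_Diff mem_Collect_eq insert_subset)
      show "(\<lambda>m. m - {e}) ` containing (matchings_on S) (insert e P) \<subseteq> containing (matchings_on (S - e)) P"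
        using matching_Diff_edge insert.hyps(2) by blast
      show "finite (containing (matchings_on (S - e)) P)"
        using finite_matchings_on[of "S - e"] insert.prems by simp
    qed
    also have "\<dots> \<le> dfact (r - 1 - card P)"
      using insert.IH[of "S - e" "r - 1"] \<open>card (S - e) = 2 * (r - 1)\<close> insert.prems by simp
    finally show ?thesis
      using insert.hyps by simp
  next
    case False
    then have "containing (matchings_on S) (insert e P) = {}"
      by blast
    then show ?thesis
      by (metis card.empty le0)
  qed
qed

lemma finite_perfect_matchings: "finite (perfect_matchings n)"
  by (simp add: perfect_matchings_eq_matchings_on finite_matchings_on)

lemma card_perfect_matching: "m \<in> perfect_matchings n \<Longrightarrow> card m = n"
  using card_eq_twice_card_matching[of m "{0..<2 * n}"] by (simp add: perfect_matchings_eq_matchings_on)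

lemma finite_perfect_matching: "m \<in> perfect_matchings n \<Longrightarrow> finite m"
  using finite_matching[of m "{0..<2 * n}"] by (simp add: perfect_matchings_eq_matchings_on)

lemma card_containing_perfect_matchings_le:
  assumes "G \<subseteq> perfect_matchings n" "finite P"
  shows "card (containing G P) \<le> dfact (n - card P)"
proof -
  have "card (containing G P) \<le> card (containing (perfect_matchings n) P)"
    using assms by (intro card_mono) (auto simp: finite_perfect_matchings)
  also have "\<dots> \<le> dfact (n - card P)"
    using card_matchings_on_containing_le[OF assms(2), of "{0..<2 * n}" n]
    by (simp add: perfect_matchings_eq_matchings_on)
  finally show ?thesis .
qed

lemma card_le_of_extra_edge:
  assumes "G \<subseteq> perfect_matchings n" "finite P" "finite I"
    and "\<And>g. g \<in> G \<Longrightarrow> P \<subseteq> g \<and> (\<exists>e\<in>I - P. e \<in> g)"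
  shows "card G \<le> card I * dfact (n - Suc (card P))"
proof -
  have "G \<subseteq> (\<Union>e\<in>I - P. containing G (insert e P))"
  proof
    fix g assume "g \<in> G"
    with assms(4) obtain e where "e \<in> I - P" "e \<in> g" "P \<subseteq> g"
      by blast
    with \<open>g \<in> G\<close> show "g \<in> (\<Union>e\<in>I - P. containing G (insert e P))"
      by blast
  qed
  then have "card G \<le> (\<Sum>e\<in>I - P. card (containing G (insert e P)))"
    using assms(1,3) finite_perfect_matchings
    by (intro card_le_sum_card_of_subset_UN) (auto intro: finite_subset)
  also have "\<dots> \<le> (\<Sum>e\<in>I - P. dfact (n - Suc (card P)))"
  proof (rule sum_mono)
    fix e assume "e \<in> I - P"
    then have "card (insert e P) = Suc (card P)"
      using assms(2) by simp
    then show "card (containing G (insert e P)) \<le> dfact (n - Suc (card P))"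
      using card_containing_perfect_matchings_le[OF assms(1), of "insert e P"] assms(2) by simp
  qed
  also have "\<dots> \<le> card I * dfact (n - Suc (card P))"
    using assms(3) by (simp add: card_mono)
  finally show ?thesis .
qed

section \<open>Spread families\<close>

lemma finite_has_maximizer:
  fixes f :: "'a \<Rightarrow> 'b::linorder"
  assumes "finite A" "A \<noteq> {}"
  obtains x where "x \<in> A" "\<And>y. y \<in> A \<Longrightarrow> f y \<le> f x"
proof -
  have "Max (f ` A) \<in> f ` A"
    using assms by (intro Max_in) auto
  then obtain x where "x \<in> A" "f x = Max (f ` A)"
    by auto
  then show ?thesis
    using that assms(1) by simp
qed

definition spread :: "nat \<Rightarrow> 'a set set \<Rightarrow> 'a set \<Rightarrow> bool" where
  "spread r G E \<longleftrightarrow> containing G E \<noteq> {} \<and>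
     (\<forall>e. e \<notin> E \<longrightarrow> r * card (containing G (insert e E)) \<le> card (containing G E))"

lemma spread_core_exists:
  assumes G: "finite G" "\<And>g. g \<in> G \<Longrightarrow> finite g" and "G \<noteq> {}"
    and large: "\<And>E. E \<subseteq> \<Union>G \<Longrightarrow> card E = q \<Longrightarrow> r ^ q * card (containing G E) < card G"
  shows "\<exists>E. finite E \<and> card E < q \<and> spread r G E"
proof -
  define \<E> where "\<E> = {E. E \<subseteq> \<Union>G \<and> card E \<le> q}"
  define f where "f E = r ^ card E * card (containing G E)" for E
  have "finite (\<Union>G)"
    using G by (rule finite_Union)
  then have "finite \<E>"
    unfolding \<E>_def by simp
  moreover have "{} \<in> \<E>"
    unfolding \<E>_def by simp
  ultimately obtain E where E: "E \<in> \<E>" and max: "\<And>E'. E' \<in> \<E> \<Longrightarrow> f E' \<le> f E"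
    using finite_has_maximizer[of \<E> f] by blast
  have E_sub: "E \<subseteq> \<Union>G" and "card E \<le> q"
    using E unfolding \<E>_def by simp_all
  then have finE: "finite E"
    using \<open>finite (\<Union>G)\<close> finite_subset by blast
  have "card G \<le> f E"
    using max[OF \<open>{} \<in> \<E>\<close>] by (simp add: f_def)
  moreover have "f E < card G" if "card E = q"
    using large[OF E_sub that] that by (simp add: f_def)
  ultimately have "card E < q"
    using \<open>card E \<le> q\<close> by fastforce
  have "containing G E \<noteq> {}"
  proof
    assume "containing G E = {}"
    then have "f E = 0"
      unfolding f_def by (metis card.empty mult_0_right)
    then show False
      using \<open>card G \<le> f E\<close> \<open>G \<noteq> {}\<close> G(1) by simp
  qed
  moreover have "r * card (containing G (insert e E)) \<le> card (containing G E)" if "e \<notin> E" for e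
  proof (cases "e \<in> \<Union>G")
    case True
    then have "f (insert e E) \<le> f E"
      using E_sub \<open>card E < q\<close> finE that by (intro max) (simp add: \<E>_def)
    then show ?thesis
      using finE that by (cases "r = 0") (simp_all add: f_def)
  next
    case False
    then have "containing G (insert e E) = {}"
      by blast
    then show ?thesis
      by (metis card.empty mult_0_right le0)
  qed
  ultimately show ?thesis
    using finE \<open>card E < q\<close> unfolding spread_def by blast
qed

lemma spread_core_exists_perfect_matchings:
  assumes "G \<subseteq> perfect_matchings n" "(n + 1) ^ q * dfact (n - q) < card G"
  shows "\<exists>E. finite E \<and> card E < q \<and> spread (n + 1) G E"
proof (rule spread_core_exists)
  show "finite G" "\<And>g. g \<in> G \<Longrightarrow> finite g"
    using assms(1) finite_perfect_matchings finite_perfect_matching by (auto intro: finite_subset)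
  show "G \<noteq> {}"
    using assms(2) by auto
  fix E assume "E \<subseteq> \<Union>G" "card E = q"
  moreover have "finite (\<Union>G)"
    using \<open>finite G\<close> \<open>\<And>g. g \<in> G \<Longrightarrow> finite g\<close> by blast
  ultimately have "card (containing G E) \<le> dfact (n - q)"
    using card_containing_perfect_matchings_le[OF assms(1)] by (metis finite_subset)
  then show "(n + 1) ^ q * card (containing G E) < card G"
    using assms(2) by (meson mult_le_mono2 order_le_less_trans)
qed

lemma spread_avoiding_member:
  assumes "finite G" "spread r G E" "finite c" "card c < r"
  shows "\<exists>g\<in>containing G E. g \<inter> c \<subseteq> E"
proof (rule ccontr)
  assume avoid: "\<not> ?thesis"
  have "containing G E \<subseteq> (\<Union>e\<in>c - E. containing G (insert e E))"
  proof
    fix g assume g: "g \<in> containing G E"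
    with avoid obtain e where "e \<in> g" "e \<in> c - E"
      by blast
    with g show "g \<in> (\<Union>e\<in>c - E. containing G (insert e E))"
      by blast
  qed
  then have "card (containing G E) \<le> (\<Sum>e\<in>c - E. card (containing G (insert e E)))"
    using assms(1,3) by (intro card_le_sum_card_of_subset_UN) simp_all
  then have "r * card (containing G E) \<le> (\<Sum>e\<in>c - E. r * card (containing G (insert e E)))"
    unfolding sum_distrib_left[symmetric] by (rule mult_le_mono2)
  also have "\<dots> \<le> (\<Sum>e\<in>c - E. card (containing G E))"
    using assms(2) unfolding spread_def by (intro sum_mono) auto
  also have "\<dots> \<le> card c * card (containing G E)"
    using assms(3) by (simp add: card_mono)
  finally have "r * card (containing G E) \<le> card c * card (containing G E)" .
  have "containing G E \<noteq> {}"
    using assms(2) unfolding spread_def by blast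
  moreover have "finite (containing G E)"
    using assms(1) by simp
  ultimately have "card c * card (containing G E) < r * card (containing G E)"
    using assms(4) by (simp only: mult_less_cancel2 card_gt_0_iff) simp
  with \<open>r * card (containing G E) \<le> card c * card (containing G E)\<close> show False
    by linarith
qed

section \<open>Traces on a small set\<close>

lemma card_le_rich_plus_traces:
  fixes A :: "'a set set"
  assumes "finite A" "finite U" "\<And>a. a \<in> A \<Longrightarrow> t \<le> card (a \<inter> U)"
  shows "card A \<le> card {a\<in>A. t < card (a \<inter> U)} + (\<Sum>T | T \<subseteq> U \<and> card T = t. card {a\<in>A. a \<inter> U = T})"
proof -
  define \<T> where "\<T> = {T. T \<subseteq> U \<and> card T = t}"
  have "A \<subseteq> {a\<in>A. t < card (a \<inter> U)} \<union> (\<Union>T\<in>\<T>. {a\<in>A. a \<inter> U = T})"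
  proof
    fix a assume "a \<in> A"
    then show "a \<in> {a\<in>A. t < card (a \<inter> U)} \<union> (\<Union>T\<in>\<T>. {a\<in>A. a \<inter> U = T})"
      using assms(3)[of a] unfolding \<T>_def by (cases "t < card (a \<inter> U)") auto
  qed
  then have "card A \<le> card ({a\<in>A. t < card (a \<inter> U)} \<union> (\<Union>T\<in>\<T>. {a\<in>A. a \<inter> U = T}))"
    using assms(1) by (intro card_mono) (auto intro: rev_finite_subset[of A])
  also have "\<dots> \<le> card {a\<in>A. t < card (a \<inter> U)} + card (\<Union>T\<in>\<T>. {a\<in>A. a \<inter> U = T})"
    by (rule card_Un_le)
  also have "card (\<Union>T\<in>\<T>. {a\<in>A. a \<inter> U = T}) \<le> (\<Sum>T\<in>\<T>. card {a\<in>A. a \<inter> U = T})"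
    unfolding \<T>_def using assms(2) by (intro card_UN_le) simp
  finally show ?thesis
    unfolding \<T>_def by simp
qed

lemma card_trace_le_card_containing:
  "finite A \<Longrightarrow> card {a\<in>A. a \<inter> U = T} \<le> card (containing A T)"
  by (intro card_mono) auto

text \<open>All diagonal terms but the largest one, x T0 * y T0, are bounded by the off-diagonal bound
  \<delta>, since (x T * y T)^2 \<le> (x T * y T0) * (x T0 * y T).\<close>

lemma sum_times_sum_le_diagonal_plus_off_diagonal:
  fixes x y :: "'a \<Rightarrow> nat"
  assumes "finite A" and diag: "\<And>T. T \<in> A \<Longrightarrow> x T * y T \<le> P"
    and off: "\<And>T T'. T \<in> A \<Longrightarrow> T' \<in> A \<Longrightarrow> T \<noteq> T' \<Longrightarrow> x T * y T' \<le> \<delta>"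
  shows "sum x A * sum y A \<le> P + (card A)\<^sup>2 * \<delta>"
proof (cases "A = {}")
  case False
  then obtain T0 where T0: "T0 \<in> A" "\<And>T. T \<in> A \<Longrightarrow> x T * y T \<le> x T0 * y T0"
    using finite_has_maximizer[OF \<open>finite A\<close>, of "\<lambda>T. x T * y T"] by blast
  have other: "x T * y T' \<le> \<delta>" if "T \<in> A" "T' \<in> A" "(T, T') \<noteq> (T0, T0)" for T T'
  proof (cases "T = T'")
    case True
    then have "T \<noteq> T0"
      using that by simp
    have "(x T * y T)\<^sup>2 \<le> (x T * y T) * (x T0 * y T0)"
      using T0(2)[OF that(1)] by (simp add: power2_eq_square)
    also have "\<dots> = (x T * y T0) * (x T0 * y T)"
      by (simp add: algebra_simps)
    also have "\<dots> \<le> \<delta>\<^sup>2"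
      using off[OF that(1) T0(1) \<open>T \<noteq> T0\<close>] off[OF T0(1) that(1)] \<open>T \<noteq> T0\<close>
      by (simp add: power2_eq_square mult_mono)
    finally show ?thesis
      using True power2_le_imp_le by blast
  qed (use off that in blast)
  have "sum x A * sum y A = (\<Sum>p\<in>A \<times> A. x (fst p) * y (snd p))"
    by (simp add: sum_product sum.cartesian_product case_prod_beta')
  also have "\<dots> = x T0 * y T0 + (\<Sum>p\<in>A \<times> A - {(T0, T0)}. x (fst p) * y (snd p))"
    using \<open>finite A\<close> T0(1) by (subst sum.remove[of _ "(T0, T0)"]) auto
  also have "\<dots> \<le> P + (\<Sum>p\<in>A \<times> A. \<delta>)"
  proof (rule add_mono)
    have "(\<Sum>p\<in>A \<times> A - {(T0, T0)}. x (fst p) * y (snd p)) \<le> (\<Sum>p\<in>A \<times> A - {(T0, T0)}. \<delta>)"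
    proof (rule sum_mono)
      fix p assume "p \<in> A \<times> A - {(T0, T0)}"
      then show "x (fst p) * y (snd p) \<le> \<delta>"
        using other[of "fst p" "snd p"] by auto
    qed
    also have "\<dots> \<le> (\<Sum>p\<in>A \<times> A. \<delta>)"
      using \<open>finite A\<close> by (intro sum_mono2) auto
    finally show "(\<Sum>p\<in>A \<times> A - {(T0, T0)}. x (fst p) * y (snd p)) \<le> (\<Sum>p\<in>A \<times> A. \<delta>)" .
  qed (rule diag[OF T0(1)])
  also have "(\<Sum>p\<in>A \<times> A. \<delta>) = (card A)\<^sup>2 * \<delta>"
    by (simp add: card_cartesian_product power2_eq_square)
  finally show ?thesis .
qed simp

lemma mult_le_square_of_split_bounds:
  fixes a b c M p q w d :: nat
  assumes "a \<le> c * w + Sa" "b \<le> c * w + Sb" "Sa \<le> M * (d * w)" "Sb \<le> M * (d * w)"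
    and "Sa * Sb \<le> p * w * (d * w) + M\<^sup>2 * (q * w * (d * w))"
    and "c\<^sup>2 + 2 * c * M + M\<^sup>2 * q + p \<le> d"
  shows "a * b \<le> (d * w)\<^sup>2"
proof -
  have "a * b \<le> (c * w + Sa) * (c * w + Sb)"
    using assms(1,2) by (rule mult_mono) simp_all
  also have "\<dots> = (c * w) * (c * w) + (c * w) * Sb + Sa * (c * w) + Sa * Sb"
    by (simp add: algebra_simps)
  also have "\<dots> \<le> (c * w) * (c * w) + (c * w) * (M * (d * w)) + (M * (d * w)) * (c * w)
                   + (p * w * (d * w) + M\<^sup>2 * (q * w * (d * w)))"
    using assms(3-5) by (intro add_mono mult_mono) simp_all
  also have "\<dots> = w * w * (c\<^sup>2 + d * (2 * c * M + p + M\<^sup>2 * q))"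
    by (simp add: algebra_simps power2_eq_square)
  also have "\<dots> \<le> w * w * (d * d)"
  proof -
    have "c\<^sup>2 \<le> d * c\<^sup>2"
      using assms(6) by (cases d) auto
    then have "c\<^sup>2 + d * (2 * c * M + p + M\<^sup>2 * q) \<le> d * (c\<^sup>2 + 2 * c * M + M\<^sup>2 * q + p)"
      by (simp add: algebra_simps)
    also have "\<dots> \<le> d * d"
      using assms(6) by simp
    finally show ?thesis
      by simp
  qed
  also have "\<dots> = (d * w)\<^sup>2"
    by (simp add: algebra_simps power2_eq_square)
  finally show ?thesis .
qed

lemma trace_count_bound:
  fixes c M q t n :: nat
  assumes "c \<le> (2 * q) ^ Suc t" "M \<le> (2 * q) ^ t" "4 * (2 * q) ^ (2 * t + 2) + 2 * t + 2 \<le> n"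
    and "0 < q"
  shows "c\<^sup>2 + 2 * c * M + M\<^sup>2 * q + (n - 1) \<le> 2 * (n - (t + 2)) + 1"
proof -
  define Q where "Q = 2 * q"
  have "1 \<le> Q"
    using assms(4) unfolding Q_def by simp
  have "c\<^sup>2 \<le> (Q ^ Suc t)\<^sup>2"
    using assms(1) unfolding Q_def by (rule power_mono) simp
  also have "\<dots> = Q ^ (2 * t + 2)"
    using power_mult[of Q "Suc t" 2] by (simp add: algebra_simps)
  finally have "c\<^sup>2 \<le> Q ^ (2 * t + 2)" .
  moreover have "c * M \<le> Q ^ (2 * t + 2)"
  proof -
    have "c * M \<le> Q ^ Suc t * Q ^ t"
      using assms(1,2) unfolding Q_def by (rule mult_mono) simp_all
    also have "\<dots> = Q ^ (Suc t + t)"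
      by (simp only: power_add)
    also have "\<dots> = Q ^ (2 * t + 1)"
      by (rule arg_cong[where f = "\<lambda>k. Q ^ k"]) simp
    also have "\<dots> \<le> Q ^ (2 * t + 2)"
      using \<open>1 \<le> Q\<close> by (intro power_increasing) simp_all
    finally show ?thesis .
  qed
  moreover have "M\<^sup>2 * q \<le> Q ^ (2 * t + 2)"
  proof -
    have "M\<^sup>2 * q \<le> (Q ^ t)\<^sup>2 * Q"
      using assms(2) unfolding Q_def by (intro mult_mono power_mono) simp_all
    also have "\<dots> = Q ^ (2 * t + 1)"
      by (simp only: power_add power_one_right power_even_eq)
    also have "\<dots> \<le> Q ^ (2 * t + 2)"
      using \<open>1 \<le> Q\<close> by (intro power_increasing) simp_all
    finally show ?thesis .
  qed
  ultimately show ?thesis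
    using assms(3) unfolding Q_def by linarith
qed

lemma binomial_le_power_of_le: "m \<le> N \<Longrightarrow> m choose k \<le> N ^ k"
  by (cases "k \<le> m") (auto intro: order_trans[OF binomial_le_pow power_mono] simp: binomial_eq_0)

section \<open>Cross-intersecting families of matchings through two adjacent edges\<close>

locale cross_intersecting_pair =
  fixes n t :: nat and X Y :: "nat set set set" and ex ey :: "nat set"
  assumes X_perfect: "X \<subseteq> perfect_matchings n" and Y_perfect: "Y \<subseteq> perfect_matchings n"
    and ex_in_X: "\<And>x. x \<in> X \<Longrightarrow> ex \<in> x" and ey_notin_X: "\<And>x. x \<in> X \<Longrightarrow> ey \<notin> x"
    and ey_in_Y: "\<And>y. y \<in> Y \<Longrightarrow> ey \<in> y" and ex_notin_Y: "\<And>y. y \<in> Y \<Longrightarrow> ex \<notin> y"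
    and cross_intersecting: "\<And>x y. x \<in> X \<Longrightarrow> y \<in> Y \<Longrightarrow> t \<le> card (x \<inter> y)"
begin

lemma swap: "cross_intersecting_pair n t Y X ey ex"
proof
  fix y x assume "y \<in> Y" "x \<in> X"
  then show "t \<le> card (y \<inter> x)"
    using cross_intersecting by (metis Int_commute)
qed (use X_perfect Y_perfect ex_in_X ey_notin_X ey_in_Y ex_notin_Y in auto)

lemma subfamily: "X' \<subseteq> X \<Longrightarrow> cross_intersecting_pair n t X' Y ex ey"
  using X_perfect Y_perfect ex_in_X ey_notin_X ey_in_Y ex_notin_Y cross_intersecting
  by unfold_locales auto

lemma finite_X: "finite X"
  using X_perfect finite_perfect_matchings finite_subset by blast

lemma card_containing_X_le:
  assumes "finite T" "ex \<notin> T"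
  shows "card (containing X T) \<le> dfact (n - Suc (card T))"
proof -
  have "containing X T = containing X (insert ex T)"
    using ex_in_X by auto
  then show ?thesis
    using card_containing_perfect_matchings_le[OF X_perfect, of "insert ex T"] assms by simp
qed

lemma spread_core_avoids: "spread r X E \<Longrightarrow> ey \<notin> E"
  unfolding spread_def using ey_notin_X by blast

lemma spread_member_meeting_inside_core:
  assumes "spread (n + 1) X E" "y \<in> perfect_matchings n"
  obtains x where "x \<in> X" "x \<inter> y \<subseteq> E"
proof -
  have "finite y" "card y < n + 1"
    using card_perfect_matching[OF assms(2)] finite_perfect_matching[OF assms(2)] by simp_all
  then show ?thesis
    using spread_avoiding_member[OF finite_X assms(1)] that by blast
qed

lemma meets_spread_core:
  assumes "spread (n + 1) X E" "y \<in> Y"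
  shows "t \<le> card (y \<inter> E)"
proof -
  have "y \<in> perfect_matchings n"
    using assms(2) Y_perfect by blast
  then obtain x where "x \<in> X" "x \<inter> y \<subseteq> E"
    using spread_member_meeting_inside_core[OF assms(1)] by blast
  then have "card (x \<inter> y) \<le> card (y \<inter> E)"
    using \<open>y \<in> perfect_matchings n\<close> finite_perfect_matching by (intro card_mono) auto
  then show ?thesis
    using cross_intersecting[OF \<open>x \<in> X\<close> assms(2)] by simp
qed

lemma card_X_rich_le:
  assumes "finite U" "ex \<notin> U"
  shows "card {x\<in>X. t < card (x \<inter> U)} \<le> (card U choose Suc t) * dfact (n - (t + 2))"
proof -
  define \<S> where "\<S> = {S. S \<subseteq> U \<and> card S = Suc t}"
  have "finite \<S>"
    unfolding \<S>_def using assms(1) by simp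
  have "{x\<in>X. t < card (x \<inter> U)} \<subseteq> (\<Union>S\<in>\<S>. containing X S)"
  proof
    fix x assume "x \<in> {x\<in>X. t < card (x \<inter> U)}"
    then obtain S where "S \<subseteq> x \<inter> U" "card S = Suc t" "x \<in> X"
      by (metis (no_types, lifting) Suc_leI mem_Collect_eq obtain_subset_with_card_n)
    then show "x \<in> (\<Union>S\<in>\<S>. containing X S)"
      unfolding \<S>_def by blast
  qed
  then have "card {x\<in>X. t < card (x \<inter> U)} \<le> (\<Sum>S\<in>\<S>. card (containing X S))"
    using \<open>finite \<S>\<close> finite_X by (intro card_le_sum_card_of_subset_UN) simp_all
  also have "\<dots> \<le> (\<Sum>S\<in>\<S>. dfact (n - (t + 2)))"
  proof (rule sum_mono)
    fix S assume "S \<in> \<S>"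
    then have "finite S" "card S = Suc t" "ex \<notin> S"
      unfolding \<S>_def using assms finite_subset by auto
    then show "card (containing X S) \<le> dfact (n - (t + 2))"
      using card_containing_X_le[of S] by simp
  qed
  also have "\<dots> = (card U choose Suc t) * dfact (n - (t + 2))"
    unfolding \<S>_def using n_subsets[OF assms(1)] by simp
  finally show ?thesis .
qed

text \<open>A member y of Y missing an edge of T forces every x \<supseteq> T in X to share with y an edge outside T.\<close>

lemma card_containing_X_le_of_missed:
  assumes T: "finite T" "card T = t" "ex \<notin> T" and y: "y \<in> Y" "\<not> T \<subseteq> y"
  shows "card (containing X T) \<le> (n - 1) * dfact (n - (t + 2))"
proof -
  have yP: "y \<in> perfect_matchings n"
    using y Y_perfect by blast
  have "card (y \<inter> T) < t"
    using T y by (metis Int_lower2 psubset_card_mono psubsetI inf.absorb_iff2 inf_commute)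
  have "card (containing X T) \<le> card (y - {ey}) * dfact (n - Suc (card (insert ex T)))"
  proof (rule card_le_of_extra_edge[where n = n])
    fix x assume x: "x \<in> containing X T"
    have "\<not> x \<inter> y \<subseteq> y \<inter> T"
      using cross_intersecting[of x y] x y \<open>card (y \<inter> T) < t\<close> finite_perfect_matching[OF yP]
      by (metis (no_types, lifting) card_mono finite_Int leD le_less_trans mem_Collect_eq)
    then show "insert ex T \<subseteq> x \<and> (\<exists>e\<in>(y - {ey}) - insert ex T. e \<in> x)"
      using x ex_in_X ey_notin_X ex_notin_Y[OF y(1)] by blast
  qed (use X_perfect T finite_perfect_matching[OF yP] in auto)
  also have "card (y - {ey}) = n - 1"
    using card_perfect_matching[OF yP] ey_in_Y[OF y(1)] finite_perfect_matching[OF yP] by simp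
  finally show ?thesis
    using T by simp
qed

lemma card_Y_trace_le_of_spread:
  assumes spread: "spread (n + 1) X E" and "finite E"
    and U: "finite U" "ey \<notin> U" and X_trace: "\<And>x. x \<in> X \<Longrightarrow> x \<inter> U = T"
    and T': "T' \<subseteq> U" "card T' = t" and "card (T \<inter> T') < t"
  shows "card {y\<in>Y. y \<inter> U = T'} \<le> card E * dfact (n - (t + 2))"
proof -
  have "finite T'"
    using T' U finite_subset by blast
  have "card {y\<in>Y. y \<inter> U = T'} \<le> card (E - U) * dfact (n - Suc (card (insert ey T')))"
  proof (rule card_le_of_extra_edge)
    fix y assume y: "y \<in> {y\<in>Y. y \<inter> U = T'}"
    then have "y \<in> perfect_matchings n"
      using Y_perfect by blast
    then obtain x where x: "x \<in> X" "x \<inter> y \<subseteq> E"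
      using spread_member_meeting_inside_core[OF spread] by blast
    have "\<not> x \<inter> y \<subseteq> U"
    proof
      assume "x \<inter> y \<subseteq> U"
      then have "x \<inter> y \<subseteq> T \<inter> T'"
        using X_trace[OF x(1)] y by blast
      then have "card (x \<inter> y) \<le> card (T \<inter> T')"
        using \<open>finite T'\<close> by (intro card_mono) auto
      then show False
        using cross_intersecting[OF x(1)] y \<open>card (T \<inter> T') < t\<close> by fastforce
    qed
    then obtain e where "e \<in> x" "e \<in> y" "e \<notin> U"
      by blast
    moreover have "ey \<notin> x"
      using ey_notin_X[OF x(1)] .
    ultimately have "e \<in> (E - U) - insert ey T'" "e \<in> y"
      using x(2) T'(1) by blast+
    moreover have "insert ey T' \<subseteq> y"
      using y ey_in_Y by blast
    ultimately show "insert ey T' \<subseteq> y \<and> (\<exists>e\<in>(E - U) - insert ey T'. e \<in> y)"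
      by blast
  qed (use Y_perfect \<open>finite T'\<close> \<open>finite E\<close> in auto)
  also have "\<dots> \<le> card E * dfact (n - (t + 2))"
  proof -
    have "ey \<notin> T'"
      using T'(1) U(2) by blast
    then have "card (insert ey T') = Suc t"
      using T'(2) \<open>finite T'\<close> by simp
    moreover have "card (E - U) \<le> card E"
      using \<open>finite E\<close> by (simp add: card_mono)
    ultimately show ?thesis
      by simp
  qed
  finally show ?thesis .
qed

lemma card_X_trace_le:
  assumes "finite U" "ex \<notin> U" "T \<subseteq> U" "card T = t"
  shows "card {x\<in>X. x \<inter> U = T} \<le> dfact (n - (t + 1))"
proof -
  have "finite T" "ex \<notin> T"
    using assms finite_subset by blast+
  have "card {x\<in>X. x \<inter> U = T} \<le> card (containing X T)"
    by (rule card_trace_le_card_containing[OF finite_X])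
  also have "\<dots> \<le> dfact (n - Suc (card T))"
    by (rule card_containing_X_le) fact+
  finally show ?thesis
    using assms(4) by simp
qed

lemma sum_X_traces_le:
  assumes "finite U" "ex \<notin> U"
  shows "(\<Sum>T | T \<subseteq> U \<and> card T = t. card {x\<in>X. x \<inter> U = T})
           \<le> (card U choose t) * dfact (n - (t + 1))"
proof -
  have "(\<Sum>T | T \<subseteq> U \<and> card T = t. card {x\<in>X. x \<inter> U = T})
          \<le> of_nat (card {T. T \<subseteq> U \<and> card T = t}) * dfact (n - (t + 1))"
    using card_X_trace_le[OF assms] by (intro sum_bounded_above) simp
  then show ?thesis
    by (simp add: n_subsets[OF assms(1)])
qed

lemma card_trace_product_le_off_diagonal:
  assumes U: "finite U" "ex \<notin> U" "ey \<notin> U"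
    and T: "T \<subseteq> U" "card T = t" and T': "T' \<subseteq> U" "card T' = t" and "T \<noteq> T'"
    and threshold: "(n + 1) ^ q * dfact (n - q) \<le> dfact (n - (t + 2))" and "0 < q"
  shows "card {x\<in>X. x \<inter> U = T} * card {y\<in>Y. y \<inter> U = T'}
           \<le> q * dfact (n - (t + 2)) * dfact (n - (t + 1))"
proof -
  define XT where "XT = {x\<in>X. x \<inter> U = T}"
  have XT_le: "card XT \<le> dfact (n - (t + 1))"
    unfolding XT_def by (rule card_X_trace_le[OF U(1,2) T])
  have YT_le: "card {y\<in>Y. y \<inter> U = T'} \<le> dfact (n - (t + 1))"
    by (rule cross_intersecting_pair.card_X_trace_le[OF swap U(1,3) T'(1,2)])
  have "finite T" "finite T'"
    using T T' U finite_subset by blast+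
  have "\<not> T \<subseteq> T'"
    using card_subset_eq[OF \<open>finite T'\<close>] T(2) T'(2) \<open>T \<noteq> T'\<close> by metis
  then have "card (T \<inter> T') < t"
    using psubset_card_mono[OF \<open>finite T\<close>, of "T \<inter> T'"] T(2) by blast
  show ?thesis
  proof (cases "card XT \<le> (n + 1) ^ q * dfact (n - q)")
    case True
    then have "card XT * card {y\<in>Y. y \<inter> U = T'} \<le> dfact (n - (t + 2)) * dfact (n - (t + 1))"
      using threshold YT_le by (intro mult_mono) simp_all
    also have "\<dots> \<le> q * dfact (n - (t + 2)) * dfact (n - (t + 1))"
      using \<open>0 < q\<close> by simp
    finally show ?thesis
      unfolding XT_def .
  next
    case False
    have "XT \<subseteq> perfect_matchings n"
      unfolding XT_def using X_perfect by blast
    with False obtain E where E: "finite E" "card E < q" "spread (n + 1) XT E"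
      using spread_core_exists_perfect_matchings by (metis not_le)
    have "card {y\<in>Y. y \<inter> U = T'} \<le> card E * dfact (n - (t + 2))"
      by (rule cross_intersecting_pair.card_Y_trace_le_of_spread[OF subfamily E(3) E(1) U(1,3) _ T'
            \<open>card (T \<inter> T') < t\<close>]) (auto simp: XT_def)
    also have "\<dots> \<le> q * dfact (n - (t + 2))"
      using E(2) by simp
    finally have "card XT * card {y\<in>Y. y \<inter> U = T'} \<le> dfact (n - (t + 1)) * (q * dfact (n - (t + 2)))"
      using XT_le by (intro mult_mono) simp_all
    then show ?thesis
      unfolding XT_def by (simp add: algebra_simps)
  qed
qed

lemma card_trace_product_le_diagonal:
  assumes U: "finite U" "ex \<notin> U" "ey \<notin> U" and T: "T \<subseteq> U" "card T = t"
    and not_common: "\<not> ((\<forall>x\<in>X. T \<subseteq> x) \<and> (\<forall>y\<in>Y. T \<subseteq> y))"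
  shows "card {x\<in>X. x \<inter> U = T} * card {y\<in>Y. y \<inter> U = T}
           \<le> (n - 1) * dfact (n - (t + 2)) * dfact (n - (t + 1))"
proof -
  interpret YX: cross_intersecting_pair n t Y X ey ex
    by (rule swap)
  have T_props: "finite T" "ex \<notin> T" "ey \<notin> T"
    using T U finite_subset by blast+
  have X_le: "card {x\<in>X. x \<inter> U = T} \<le> dfact (n - (t + 1))"
    and Y_le: "card {y\<in>Y. y \<inter> U = T} \<le> dfact (n - (t + 1))"
    using card_X_trace_le YX.card_X_trace_le U T by blast+
  show ?thesis
  proof (cases "\<exists>y\<in>Y. \<not> T \<subseteq> y")
    case True
    then obtain y where "y \<in> Y" "\<not> T \<subseteq> y"
      by blast
    have "card {x\<in>X. x \<inter> U = T} \<le> card (containing X T)"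
      by (rule card_trace_le_card_containing[OF finite_X])
    also have "\<dots> \<le> (n - 1) * dfact (n - (t + 2))"
      using card_containing_X_le_of_missed T(2) T_props \<open>y \<in> Y\<close> \<open>\<not> T \<subseteq> y\<close> by blast
    finally show ?thesis
      using Y_le by (intro mult_mono) simp_all
  next
    case False
    then obtain x where "x \<in> X" "\<not> T \<subseteq> x"
      using not_common by blast
    have "card {y\<in>Y. y \<inter> U = T} \<le> card (containing Y T)"
      by (rule card_trace_le_card_containing[OF YX.finite_X])
    also have "\<dots> \<le> (n - 1) * dfact (n - (t + 2))"
      using YX.card_containing_X_le_of_missed T(2) T_props \<open>x \<in> X\<close> \<open>\<not> T \<subseteq> x\<close> by blast
    finally have "card {y\<in>Y. y \<inter> U = T} * card {x\<in>X. x \<inter> U = T}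
                    \<le> (n - 1) * dfact (n - (t + 2)) * dfact (n - (t + 1))"
      using X_le by (intro mult_mono) simp_all
    then show ?thesis
      by (simp only: mult.commute)
  qed
qed

lemma exists_trace_set:
  assumes "(n + 1) ^ q * dfact (n - q) < card X" "(n + 1) ^ q * dfact (n - q) < card Y"
  obtains U where "finite U" "card U \<le> 2 * q" "ex \<notin> U" "ey \<notin> U"
    "\<And>x. x \<in> X \<Longrightarrow> t \<le> card (x \<inter> U)" "\<And>y. y \<in> Y \<Longrightarrow> t \<le> card (y \<inter> U)"
proof -
  interpret YX: cross_intersecting_pair n t Y X ey ex
    by (rule swap)
  obtain E_X where E_X: "finite E_X" "card E_X < q" "spread (n + 1) X E_X"
    using spread_core_exists_perfect_matchings[OF X_perfect assms(1)] by blast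
  obtain E_Y where E_Y: "finite E_Y" "card E_Y < q" "spread (n + 1) Y E_Y"
    using spread_core_exists_perfect_matchings[OF Y_perfect assms(2)] by blast
  define U where "U = (E_X \<union> E_Y) - {ex, ey}"
  have "finite U"
    unfolding U_def using E_X(1) E_Y(1) by simp
  moreover have "card U \<le> 2 * q"
  proof -
    have "card U \<le> card (E_X \<union> E_Y)"
      unfolding U_def using E_X(1) E_Y(1) by (intro card_mono) auto
    also have "\<dots> \<le> card E_X + card E_Y"
      by (rule card_Un_le)
    finally show ?thesis
      using E_X(2) E_Y(2) by simp
  qed
  moreover have "t \<le> card (x \<inter> U)" if "x \<in> X" for x
  proof -
    have "x \<inter> E_Y \<subseteq> x \<inter> U"
      unfolding U_def using ey_notin_X[OF that] YX.spread_core_avoids[OF E_Y(3)] by blast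
    then have "card (x \<inter> E_Y) \<le> card (x \<inter> U)"
      using \<open>finite U\<close> by (intro card_mono) auto
    then show ?thesis
      using YX.meets_spread_core[OF E_Y(3) that] by simp
  qed
  moreover have "t \<le> card (y \<inter> U)" if "y \<in> Y" for y
  proof -
    have "y \<inter> E_X \<subseteq> y \<inter> U"
      unfolding U_def using ex_notin_Y[OF that] spread_core_avoids[OF E_X(3)] by blast
    then have "card (y \<inter> E_X) \<le> card (y \<inter> U)"
      using \<open>finite U\<close> by (intro card_mono) auto
    then show ?thesis
      using meets_spread_core[OF E_X(3) that] by simp
  qed
  ultimately show ?thesis
    using that unfolding U_def by blast
qed

lemma card_product_le_of_common_subset:
  assumes T: "finite T" "card T = t" "ex \<notin> T" "ey \<notin> T"
    and common: "\<forall>x\<in>X. T \<subseteq> x" "\<forall>y\<in>Y. T \<subseteq> y"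
  shows "card X * card Y \<le> (dfact (n - (t + 1)))\<^sup>2"
proof -
  have "containing X T = X" "containing Y T = Y"
    using common by blast+
  then have "card X \<le> dfact (n - (t + 1))" "card Y \<le> dfact (n - (t + 1))"
    using card_containing_X_le[OF T(1,3)] cross_intersecting_pair.card_containing_X_le[OF swap T(1,4)]
      T(2) by simp_all
  then show ?thesis
    by (simp add: power2_eq_square mult_mono)
qed

lemma sum_trace_products_le:
  assumes U: "finite U" "ex \<notin> U" "ey \<notin> U"
    and no_common: "\<And>T. T \<subseteq> U \<Longrightarrow> card T = t \<Longrightarrow> \<not> ((\<forall>x\<in>X. T \<subseteq> x) \<and> (\<forall>y\<in>Y. T \<subseteq> y))"
    and threshold: "(n + 1) ^ q * dfact (n - q) \<le> dfact (n - (t + 2))" and "0 < q"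
  shows "(\<Sum>T | T \<subseteq> U \<and> card T = t. card {x\<in>X. x \<inter> U = T})
           * (\<Sum>T | T \<subseteq> U \<and> card T = t. card {y\<in>Y. y \<inter> U = T})
         \<le> (n - 1) * dfact (n - (t + 2)) * dfact (n - (t + 1))
           + (card U choose t)\<^sup>2 * (q * dfact (n - (t + 2)) * dfact (n - (t + 1)))"
proof -
  have "(\<Sum>T | T \<subseteq> U \<and> card T = t. card {x\<in>X. x \<inter> U = T})
          * (\<Sum>T | T \<subseteq> U \<and> card T = t. card {y\<in>Y. y \<inter> U = T})
        \<le> (n - 1) * dfact (n - (t + 2)) * dfact (n - (t + 1))
          + (card {T. T \<subseteq> U \<and> card T = t})\<^sup>2 * (q * dfact (n - (t + 2)) * dfact (n - (t + 1)))"
  proof (rule sum_times_sum_le_diagonal_plus_off_diagonal)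
    show "finite {T. T \<subseteq> U \<and> card T = t}"
      using U(1) by simp
  next
    fix T assume "T \<in> {T. T \<subseteq> U \<and> card T = t}"
    then have "T \<subseteq> U" "card T = t"
      by simp_all
    then show "card {x\<in>X. x \<inter> U = T} * card {y\<in>Y. y \<inter> U = T}
                 \<le> (n - 1) * dfact (n - (t + 2)) * dfact (n - (t + 1))"
      by (intro card_trace_product_le_diagonal[OF U] no_common)
  next
    fix T T' assume "T \<in> {T. T \<subseteq> U \<and> card T = t}" "T' \<in> {T. T \<subseteq> U \<and> card T = t}" "T \<noteq> T'"
    then have "T \<subseteq> U" "card T = t" "T' \<subseteq> U" "card T' = t"
      by simp_all
    then show "card {x\<in>X. x \<inter> U = T} * card {y\<in>Y. y \<inter> U = T'}
                 \<le> q * dfact (n - (t + 2)) * dfact (n - (t + 1))"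
      by (rule card_trace_product_le_off_diagonal[OF U _ _ _ _ \<open>T \<noteq> T'\<close> threshold \<open>0 < q\<close>])
  qed
  then show ?thesis
    unfolding n_subsets[OF U(1)] .
qed

lemma card_product_le_of_trace_set:
  assumes U: "finite U" "card U \<le> 2 * q" "ex \<notin> U" "ey \<notin> U"
    and X_meets: "\<And>x. x \<in> X \<Longrightarrow> t \<le> card (x \<inter> U)" and Y_meets: "\<And>y. y \<in> Y \<Longrightarrow> t \<le> card (y \<inter> U)"
    and threshold: "(n + 1) ^ q * dfact (n - q) \<le> dfact (n - (t + 2))"
    and n_large: "4 * (2 * q) ^ (2 * t + 2) + 2 * t + 2 \<le> n" and "0 < q"
  shows "card X * card Y \<le> (dfact (n - (t + 1)))\<^sup>2"
proof (cases "\<exists>T. T \<subseteq> U \<and> card T = t \<and> (\<forall>x\<in>X. T \<subseteq> x) \<and> (\<forall>y\<in>Y. T \<subseteq> y)")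
  case True
  then show ?thesis
    using card_product_le_of_common_subset U finite_subset by (metis subsetD)
next
  case False
  interpret YX: cross_intersecting_pair n t Y X ey ex
    by (rule swap)
  define Sx where "Sx = (\<Sum>T | T \<subseteq> U \<and> card T = t. card {x\<in>X. x \<inter> U = T})"
  define Sy where "Sy = (\<Sum>T | T \<subseteq> U \<and> card T = t. card {y\<in>Y. y \<inter> U = T})"
  define W where "W = dfact (n - (t + 2))"
  define d where "d = 2 * (n - (t + 2)) + 1"
  have D_eq: "dfact (n - (t + 1)) = d * W"
    unfolding d_def W_def using n_large by (simp add: Suc_diff_Suc[symmetric])
  have "card X \<le> (card U choose Suc t) * W + Sx"
    using card_le_rich_plus_traces[OF finite_X U(1) X_meets] card_X_rich_le[OF U(1,3)]
    unfolding Sx_def W_def by linarith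
  moreover have "card Y \<le> (card U choose Suc t) * W + Sy"
    using card_le_rich_plus_traces[OF YX.finite_X U(1) Y_meets] YX.card_X_rich_le[OF U(1,4)]
    unfolding Sy_def W_def by linarith
  moreover have "Sx \<le> (card U choose t) * (d * W)" "Sy \<le> (card U choose t) * (d * W)"
    using sum_X_traces_le[OF U(1,3)] YX.sum_X_traces_le[OF U(1,4)]
    unfolding Sx_def Sy_def D_eq by simp_all
  moreover have "Sx * Sy \<le> (n - 1) * W * (d * W) + (card U choose t)\<^sup>2 * (q * W * (d * W))"
    using sum_trace_products_le[OF U(1,3,4) _ threshold \<open>0 < q\<close>] False
    unfolding Sx_def Sy_def D_eq W_def by blast
  moreover have "(card U choose Suc t)\<^sup>2 + 2 * (card U choose Suc t) * (card U choose t)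
                   + (card U choose t)\<^sup>2 * q + (n - 1) \<le> d"
    unfolding d_def
    by (rule trace_count_bound[OF binomial_le_power_of_le[OF U(2)] binomial_le_power_of_le[OF U(2)]
          n_large \<open>0 < q\<close>])
  ultimately have "card X * card Y \<le> (d * W)\<^sup>2"
    by (rule mult_le_square_of_split_bounds)
  then show ?thesis
    unfolding D_eq .
qed

theorem card_product_le:
  assumes threshold: "(n + 1) ^ q * dfact (n - q) * dfact (n - 1) \<le> (dfact (n - (t + 2)))\<^sup>2"
    and n_large: "4 * (2 * q) ^ (2 * t + 2) + 2 * t + 2 \<le> n" and "0 < q"
  shows "card X * card Y \<le> (dfact (n - (t + 1)))\<^sup>2"
proof -
  interpret YX: cross_intersecting_pair n t Y X ey ex
    by (rule swap)
  define \<tau> where "\<tau> = (n + 1) ^ q * dfact (n - q)"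
  have "\<tau> * dfact (n - (t + 2)) \<le> \<tau> * dfact (n - 1)"
    by (intro mult_left_mono dfact_mono) simp_all
  also have "\<dots> \<le> dfact (n - (t + 2)) * dfact (n - (t + 2))"
    using threshold unfolding \<tau>_def by (simp add: power2_eq_square)
  finally have \<tau>_le: "\<tau> \<le> dfact (n - (t + 2))"
    using dfact_pos by simp
  show ?thesis
  proof (cases "card X \<le> \<tau> \<or> card Y \<le> \<tau>")
    case True
    have "card X \<le> dfact (n - 1)" "card Y \<le> dfact (n - 1)"
      using card_containing_X_le[of "{}"] YX.card_containing_X_le[of "{}"] by simp_all
    with True have "card X * card Y \<le> \<tau> * dfact (n - 1)"
      by (metis mult.commute mult_mono zero_le)
    also have "\<dots> \<le> (dfact (n - (t + 2)))\<^sup>2"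
      using threshold unfolding \<tau>_def .
    also have "\<dots> \<le> (dfact (n - (t + 1)))\<^sup>2"
      by (intro power_mono dfact_mono) simp_all
    finally show ?thesis .
  next
    case False
    then obtain U where "finite U" "card U \<le> 2 * q" "ex \<notin> U" "ey \<notin> U"
      "\<And>x. x \<in> X \<Longrightarrow> t \<le> card (x \<inter> U)" "\<And>y. y \<in> Y \<Longrightarrow> t \<le> card (y \<inter> U)"
      using exists_trace_set unfolding \<tau>_def by (metis not_le)
    then show ?thesis
      using card_product_le_of_trace_set \<tau>_le n_large \<open>0 < q\<close> unfolding \<tau>_def by blast
  qed
qed

end

lemma cross_intersecting_pair_restrict_edge:
  assumes F: "F \<subseteq> perfect_matchings n" and "t_intersecting t F"
    and "i \<noteq> j" "i \<noteq> k" "j \<noteq> k"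
  shows "cross_intersecting_pair n t (restrict_edge F i j) (restrict_edge F i k) {i, j} {i, k}"
proof -
  have "{i, j} \<noteq> {i, k}"
    using \<open>i \<noteq> j\<close> \<open>j \<noteq> k\<close> by (metis insert_iff singletonD)
  then have not_both: "\<not> ({i, j} \<in> m \<and> {i, k} \<in> m)" if "m \<in> F" for m
    using matching_edge_unique[of m "{0..<2 * n}" "{i, j}" "{i, k}" i] that F
    by (auto simp: perfect_matchings_eq_matchings_on)
  show ?thesis
    using assms(1,2) not_both unfolding restrict_edge_def t_intersecting_def
    by unfold_locales auto
qed

section \<open>Choice of the core size\<close>

lemma power_le_power_of_core_size:
  fixes n t L r :: nat
  assumes L: "2 * n + 2 \<le> 2 ^ L" and r: "4 * (n + 1) \<le> 3 * r"
  shows "(n + 1) ^ (t + 2 + 3 * ((2 * t + 3) * L)) * (2 * n) ^ (t + 1) \<le> r ^ (3 * ((2 * t + 3) * L))"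
proof -
  define K where "K = (2 * t + 3) * L"
  define m where "m = 3 * K"
  have "(n + 1) ^ (t + 2) * (2 * n) ^ (t + 1) \<le> (2 * n + 2) ^ (t + 2) * (2 * n + 2) ^ (t + 1)"
    by (intro mult_mono power_mono) simp_all
  also have "\<dots> = (2 * n + 2) ^ ((t + 2) + (t + 1))"
    by (simp only: power_add)
  also have "\<dots> \<le> (2 ^ L) ^ ((t + 2) + (t + 1))"
    using L by (rule power_mono) simp
  also have "\<dots> = 2 ^ K"
    unfolding K_def by (simp only: power_mult[symmetric] mult.commute) (simp add: algebra_simps)
  finally have small: "(n + 1) ^ (t + 2) * (2 * n) ^ (t + 1) \<le> 2 ^ K" .
  have "3 ^ m * 2 ^ K = (54::nat) ^ K"
    unfolding m_def by (simp add: power_mult power_mult_distrib[symmetric])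
  also have "\<dots> \<le> 4 ^ m"
    unfolding m_def by (simp add: power_mult power_mono)
  finally have base: "3 ^ m * 2 ^ K \<le> (4::nat) ^ m" .
  have "4 ^ m * ((n + 1) ^ (t + 2 + m) * (2 * n) ^ (t + 1))
          = ((n + 1) ^ (t + 2) * (2 * n) ^ (t + 1)) * (4 * (n + 1)) ^ m"
    by (simp only: power_add power_mult_distrib mult_ac)
  also have "\<dots> \<le> 2 ^ K * (3 * r) ^ m"
    by (rule mult_mono[OF small power_mono[OF r]]) simp_all
  also have "\<dots> = (3 ^ m * 2 ^ K) * r ^ m"
    by (simp add: power_mult_distrib algebra_simps)
  also have "\<dots> \<le> 4 ^ m * r ^ m"
    using base by (rule mult_right_mono) simp
  finally have "(n + 1) ^ (t + 2 + m) * (2 * n) ^ (t + 1) \<le> r ^ m"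
    by (rule mult_le_cancel1[THEN iffD1, THEN mp]) simp
  then show ?thesis
    unfolding m_def K_def .
qed

lemma dfact_core_size_bound:
  fixes n t L :: nat
  defines "q \<equiv> t + 2 + 3 * ((2 * t + 3) * L)"
  assumes L: "2 * n + 2 \<le> 2 ^ L" and n_large: "6 * q + 1 \<le> 2 * n"
  shows "(n + 1) ^ q * dfact (n - q) * dfact (n - 1) \<le> (dfact (n - (t + 2)))\<^sup>2"
proof -
  define m where "m = 3 * ((2 * t + 3) * L)"
  define W where "W = dfact (n - (t + 2))"
  define r where "r = 2 * (n - q) + 1"
  have "n - 1 = (n - (t + 2)) + (t + 1)"
    using n_large unfolding q_def by simp
  then have "dfact (n - 1) = dfact ((n - (t + 2)) + (t + 1))"
    by (rule arg_cong)
  also have "\<dots> \<le> (2 * n) ^ (t + 1) * W"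
    unfolding W_def using n_large unfolding q_def
    by (intro order_trans[OF dfact_add_le] mult_right_mono power_mono) simp_all
  finally have upper: "dfact (n - 1) \<le> (2 * n) ^ (t + 1) * W" .
  have "r ^ m * dfact (n - q) \<le> dfact ((n - q) + m)"
    unfolding r_def by (rule dfact_add_ge)
  also have "(n - q) + m = n - (t + 2)"
    using n_large unfolding q_def m_def by simp
  finally have lower: "r ^ m * dfact (n - q) \<le> W"
    unfolding W_def .
  have "4 * (n + 1) \<le> 3 * r"
    unfolding r_def using n_large by arith
  then have key: "(n + 1) ^ q * (2 * n) ^ (t + 1) \<le> r ^ m"
    unfolding q_def m_def by (rule power_le_power_of_core_size[OF L])
  have "(n + 1) ^ q * dfact (n - q) * dfact (n - 1)
          \<le> (n + 1) ^ q * dfact (n - q) * ((2 * n) ^ (t + 1) * W)"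
    using upper by (rule mult_left_mono) simp
  also have "\<dots> = ((n + 1) ^ q * (2 * n) ^ (t + 1)) * dfact (n - q) * W"
    by (simp only: mult_ac)
  also have "\<dots> \<le> r ^ m * dfact (n - q) * W"
    using key by (intro mult_right_mono) simp_all
  also have "\<dots> \<le> W * W"
    using lower by (intro mult_right_mono) simp_all
  finally show ?thesis
    unfolding W_def by (simp add: power2_eq_square)
qed

lemma polynomial_le_exponential: "\<exists>L0. \<forall>L\<ge>L0. a * (L + 1) ^ k + b \<le> (2::nat) ^ L"
proof -
  have "((\<lambda>x::real. (a * (x + 1) ^ k + b) / 2 powr x) \<longlongrightarrow> 0) at_top"
    by real_asymp
  then have "eventually (\<lambda>x::real. (a * (x + 1) ^ k + b) / 2 powr x < 1) at_top"
    by (rule order_tendstoD(2)) simp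
  then have "eventually (\<lambda>L::nat. (a * (real L + 1) ^ k + b) / 2 powr real L < 1) sequentially"
    by (rule eventually_compose_filterlim[OF _ filterlim_real_sequentially])
  then obtain L0 where L0: "\<And>L. L \<ge> L0 \<Longrightarrow> (a * (real L + 1) ^ k + b) / 2 powr real L < 1"
    unfolding eventually_sequentially by blast
  have "a * (L + 1) ^ k + b \<le> (2::nat) ^ L" if "L \<ge> L0" for L
  proof -
    have "real (a * (L + 1) ^ k + b) < real ((2::nat) ^ L)"
      using L0[OF that] by (simp add: powr_realpow divide_less_eq add.commute)
    then show ?thesis
      by linarith
  qed
  then show ?thesis
    by blast
qed

text \<open>The core size q grows like log n: large enough for the threshold estimate, small enough that
  the traces on a set of 2q edges are negligible.\<close>

lemma core_size_exists:
  "\<exists>n0. \<forall>n\<ge>n0. \<exists>q>0. (n + 1) ^ q * dfact (n - q) * dfact (n - 1) \<le> (dfact (n - (t + 2)))\<^sup>2 \<and>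
                       4 * (2 * q) ^ (2 * t + 2) + 2 * t + 2 \<le> n"
proof -
  define k where "k = 2 * t + 2"
  define c where "c = 2 * (t + 2) + 6 * (2 * t + 3)"
  obtain L0 where L0: "\<And>L. L \<ge> L0 \<Longrightarrow> 16 * c ^ k * (L + 1) ^ k + (8 * t + 12) \<le> (2::nat) ^ L"
    using polynomial_le_exponential by blast
  have "\<exists>q>0. (n + 1) ^ q * dfact (n - q) * dfact (n - 1) \<le> (dfact (n - (t + 2)))\<^sup>2 \<and>
                4 * (2 * q) ^ k + 2 * t + 2 \<le> n" if n: "2 ^ L0 \<le> n" for n
  proof -
    define L where "L = ceillog2 (2 * n + 2)"
    define q where "q = t + 2 + 3 * ((2 * t + 3) * L)"
    have L_lower: "2 * n + 2 \<le> 2 ^ L" and L_upper: "2 ^ L < 2 * (2 * n + 2)"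
      unfolding L_def using le_two_power_ceillog2 two_power_ceillog2_gt[of "2 * n + 2"] by simp_all
    have "L0 \<le> L"
      unfolding L_def using n by (subst ceillog2_ge_iff) simp_all
    have "2 * q \<le> c * (L + 1)"
      unfolding q_def c_def by (simp add: algebra_simps)
    then have "(2 * q) ^ k \<le> (c * (L + 1)) ^ k"
      by (rule power_mono) simp
    then have "16 * (2 * q) ^ k + (8 * t + 12) \<le> 2 ^ L"
      using L0[OF \<open>L0 \<le> L\<close>] power_mult_distrib[of c "L + 1" k] by linarith
    then have q_small: "4 * (2 * q) ^ k + 2 * t + 2 \<le> n"
      using L_upper by presburger
    moreover have "2 * q \<le> (2 * q) ^ k"
      unfolding k_def q_def by (intro self_le_power) simp_all
    ultimately have "6 * q + 1 \<le> 2 * n"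
      by linarith
    then have "(n + 1) ^ q * dfact (n - q) * dfact (n - 1) \<le> (dfact (n - (t + 2)))\<^sup>2"
      unfolding q_def by (rule dfact_core_size_bound[OF L_lower, unfolded q_def])
    moreover have "0 < q"
      unfolding q_def by simp
    ultimately show ?thesis
      using q_small by blast
  qed
  then show ?thesis
    unfolding k_def by blast
qed

lemma card_restrict_edge_product_le:
  assumes "F \<subseteq> perfect_matchings n" "t_intersecting t F" "i \<noteq> j" "i \<noteq> k" "j \<noteq> k"
    and "0 < q" "(n + 1) ^ q * dfact (n - q) * dfact (n - 1) \<le> (dfact (n - (t + 2)))\<^sup>2"
    and "4 * (2 * q) ^ (2 * t + 2) + 2 * t + 2 \<le> n"
  shows "card (restrict_edge F i j) * card (restrict_edge F i k) \<le> (dfact (n - (t + 1)))\<^sup>2"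
  using cross_intersecting_pair.card_product_le[OF cross_intersecting_pair_restrict_edge[OF assms(1-5)]
      assms(7,8,6)] .

theorem mainTheorem20:
  "\<forall>t::nat. \<exists>n0::nat. \<forall>n\<ge>n0. \<forall>F i j k.
     F \<subseteq> perfect_matchings n \<longrightarrow> t_intersecting t F \<longrightarrow>
     i < 2 * n \<longrightarrow> j < 2 * n \<longrightarrow> k < 2 * n \<longrightarrow>
     i \<noteq> j \<longrightarrow> i \<noteq> k \<longrightarrow> j \<noteq> k \<longrightarrow>
     card (restrict_edge F i j) * card (restrict_edge F i k) \<le> (dfact (n - t - 1))\<^sup>2"
proof
  fix t :: nat
  obtain n0 where "\<And>n. n0 \<le> n \<Longrightarrow> \<exists>q>0. (n + 1) ^ q * dfact (n - q) * dfact (n - 1)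
      \<le> (dfact (n - (t + 2)))\<^sup>2 \<and> 4 * (2 * q) ^ (2 * t + 2) + 2 * t + 2 \<le> n"
    using core_size_exists by blast
  then show "\<exists>n0. \<forall>n\<ge>n0. \<forall>F i j k.
     F \<subseteq> perfect_matchings n \<longrightarrow> t_intersecting t F \<longrightarrow>
     i < 2 * n \<longrightarrow> j < 2 * n \<longrightarrow> k < 2 * n \<longrightarrow>
     i \<noteq> j \<longrightarrow> i \<noteq> k \<longrightarrow> j \<noteq> k \<longrightarrow>
     card (restrict_edge F i j) * card (restrict_edge F i k) \<le> (dfact (n - t - 1))\<^sup>2"
    using card_restrict_edge_product_le by (metis diff_diff_left)
qed

end
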